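(* Let $V$ be a finite-dimensional complex vector space and $\xi:\mathbb C\to\mathrm{End}(V)$ a rational function with $\xi(\infty)=1$ and $[\xi(u),\xi(v)]=0$ for all $u,v$. Let $\sigma(\xi)\subset\mathbb C$ be the set of poles of $\xi(u)^{\pm1}$ and $\mathsf X(\xi)=\bigcup_{a\in\sigma(\xi)}[0,a]$, where $[0,a]$ is the line segment from $0$ to $a$. Then there is a unique single-valued holomorphic function $t:\mathbb C\setminus\mathsf X(\xi)\to\mathrm{End}(V)$ (holomorphic also at $u=\infty$) such that $\exp(t(u))=\xi(u)$ and $t(\infty)=0$. Moreover $[t(u),t(v)]=0$ for all $u,v$, and $t'(u)=\xi(u)^{-1}\xi'(u)$. *)

theory Defs
  imports "HOL-Complex_Analysis.Complex_Analysis" "HOL-Computational_Algebra.Polynomial"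
begin

text \<open>End(V) for V = complex^'n is modelled by complex matrices complex^'n^'n
  (matrix product **, identity mat 1, inverse matrix_inv).\<close>

definition mpow :: "complex^'n^'n \<Rightarrow> nat \<Rightarrow> complex^'n^'n" where
  "mpow A k = (((**) A) ^^ k) (mat 1)"

text \<open>Matrix exponential (the vec type's exp would be entrywise, so we define it).\<close>
definition mexp :: "complex^'n^'n \<Rightarrow> complex^'n^'n" where
  "mexp A = (\<Sum>k. (1 / fact k) *\<^sub>R mpow A k)"

definition rational_mfun :: "(complex \<Rightarrow> complex^'n^'n) \<Rightarrow> bool" where
  "rational_mfun f \<longleftrightarrow>
     (\<exists>(P :: complex poly^'n^'n) q. q \<noteq> 0 \<and>
        (\<forall>u. poly q u \<noteq> 0 \<longrightarrow> f u = (\<chi> i j. poly (P$i$j) u / poly q u))) \<and>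
     (\<forall>u. \<not> is_pole f u \<longrightarrow> isCont f u)"

definition pole_set :: "(complex \<Rightarrow> complex^'n^'n) \<Rightarrow> complex set" where
  "pole_set f = {a. is_pole f a \<or> is_pole (\<lambda>u. matrix_inv (f u)) a}"

definition cutX :: "(complex \<Rightarrow> complex^'n^'n) \<Rightarrow> complex set" where
  "cutX f = (\<Union>a\<in>pole_set f. closed_segment 0 a)"

definition mholo_on :: "(complex \<Rightarrow> complex^'n^'n) \<Rightarrow> complex set \<Rightarrow> bool" where
  "mholo_on f S \<longleftrightarrow> (\<forall>i j. (\<lambda>u. f u $ i $ j) holomorphic_on S)"

definition mderiv :: "(complex \<Rightarrow> complex^'n^'n) \<Rightarrow> complex \<Rightarrow> complex^'n^'n" where
  "mderiv f u = (\<chi> i j. deriv (\<lambda>v. f v $ i $ j) u)"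

text \<open>f is holomorphic at infinity with value 0 there: w \<mapsto> f(1/w), extended by 0 at w = 0,
  is holomorphic near 0.\<close>
definition holo_at_inf_zero :: "(complex \<Rightarrow> complex^'n^'n) \<Rightarrow> bool" where
  "holo_at_inf_zero f \<longleftrightarrow>
     (\<exists>r>0. mholo_on (\<lambda>w. if w = 0 then 0 else f (inverse w)) (ball 0 r))"

end

theory Submission
  imports Defs
begin

text \<open>In the coordinate \<open>w = 1/u\<close> put \<open>h(w) = \<xi>(1/w)\<close> and \<open>h(0) = 1\<close>. Because \<open>X(\<xi>)\<close> is a
  union of segments ending at \<open>0\<close>, the domain \<open>{w. w = 0 \<or> 1/w \<notin> X(\<xi>)}\<close> is star-shaped about
  \<open>0\<close>, and there \<open>h\<close> is holomorphic with invertible, pairwise commuting values. So the logarithmic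
  derivative \<open>g = h\<^sup>-\<^sup>1 h'\<close> has a primitive \<open>T\<close> with \<open>T(0) = 0\<close>. A matrix commuting with every
  \<open>g(z)\<close> commutes with \<open>T\<close>, since the commutator has derivative \<open>0\<close>; hence \<open>T\<close> commutes with
  \<open>h\<close>, \<open>h'\<close> and itself, \<open>exp(-T) h\<close> has derivative \<open>exp(-T) (h' - g h) = 0\<close>, and \<open>exp T = h\<close>.
  Then \<open>t(u) = T(1/u)\<close>, and \<open>t' = \<xi>\<^sup>-\<^sup>1 \<xi>'\<close> by the chain rule. Another logarithm of \<open>h\<close>
  vanishing at \<open>0\<close> agrees with \<open>T\<close> near \<open>0\<close>, where both are small and \<open>exp\<close> is injective,
  hence everywhere by analytic continuation.\<close>

no_notation fps_nth (infixl "$" 75)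

section \<open>Complex matrices as a Banach algebra\<close>

lemma norm_axis_complex [simp]: "norm (axis j (1::complex)) = 1"
proof -
  have "(norm (axis j (1::complex) $ i))\<^sup>2 = (if i = j then 1 else 0)" for i
    by (auto simp: axis_def)
  then show ?thesis by (simp add: norm_vec_def L2_set_def)
qed

lemma matrix_add_rdistrib: "(B + C) ** A = B ** A + C ** A"
  by (vector matrix_matrix_mult_def sum.distrib[symmetric] field_simps)

lemma scaleR_matrix_vector_mult: "(r *\<^sub>R A) *v v = r *\<^sub>R (A *v v)" for A :: "complex^'n^'m"
  by (simp add: vec_eq_iff matrix_vector_mult_def scaleR_sum_right)

lemma bounded_linear_matrix_vector_mult: "bounded_linear (\<lambda>v::complex^'n. A *v v)"
  by (simp add: linear_conv_bounded_linear)

lemma norm_entry_le_onorm: "cmod (A $ i $ j) \<le> onorm (\<lambda>v::complex^'n. A *v v)"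
proof -
  have "cmod (A $ i $ j) \<le> norm (A *v axis j 1)"
    using Finite_Cartesian_Product.norm_nth_le[of "A *v axis j 1" i]
    by (simp add: matrix_vector_mult_def axis_def if_distrib cong: if_cong)
  also have "\<dots> \<le> onorm (\<lambda>v. A *v v) * norm (axis j (1::complex))"
    by (rule onorm[OF bounded_linear_matrix_vector_mult])
  finally show ?thesis by simp
qed

lemma norm_le_sum_norm_entries: "norm (A::complex^'n^'m) \<le> (\<Sum>i\<in>UNIV. \<Sum>j\<in>UNIV. cmod (A $ i $ j))"
proof -
  have "norm A \<le> (\<Sum>i\<in>UNIV. norm (A $ i))" by (simp add: norm_vec_def L2_set_le_sum)
  also have "\<dots> \<le> (\<Sum>i\<in>UNIV. \<Sum>j\<in>UNIV. cmod (A $ i $ j))"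
    by (rule sum_mono) (simp add: norm_vec_def L2_set_le_sum)
  finally show ?thesis .
qed

text \<open>On \<open>complex^'n^'n\<close> the product \<open>*\<close> is entrywise, so \<open>End(\<complex>\<^sup>n)\<close> with the matrix
  product and the operator norm is introduced as a copy of it; its \<open>exp\<close> is \<open>mexp\<close>
  (\<open>mexp_Rep_cmat\<close>).\<close>

typedef ('n::finite) cmat = "UNIV :: (complex^'n^'n) set" ..

setup_lifting type_definition_cmat

instantiation cmat :: (finite) real_normed_algebra_1
begin

lift_definition norm_cmat :: "'a cmat \<Rightarrow> real" is "\<lambda>A. onorm (\<lambda>v. A *v v)" .
lift_definition minus_cmat :: "'a cmat \<Rightarrow> 'a cmat \<Rightarrow> 'a cmat" is "(-)" .
lift_definition plus_cmat :: "'a cmat \<Rightarrow> 'a cmat \<Rightarrow> 'a cmat" is "(+)" .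
lift_definition uminus_cmat :: "'a cmat \<Rightarrow> 'a cmat" is "uminus" .
lift_definition zero_cmat :: "'a cmat" is "0" .
lift_definition one_cmat :: "'a cmat" is "mat 1" .
lift_definition times_cmat :: "'a cmat \<Rightarrow> 'a cmat \<Rightarrow> 'a cmat" is "(**)" .
lift_definition scaleR_cmat :: "real \<Rightarrow> 'a cmat \<Rightarrow> 'a cmat" is "scaleR" .

definition dist_cmat :: "'a cmat \<Rightarrow> 'a cmat \<Rightarrow> real" where
  "dist_cmat a b = norm (a - b)"

definition uniformity_cmat :: "('a cmat \<times> 'a cmat) filter" where
  "uniformity_cmat = (INF e\<in>{0 <..}. principal {(x, y). dist x y < e})"

definition open_cmat :: "'a cmat set \<Rightarrow> bool" where
  "open_cmat S = (\<forall>x\<in>S. \<forall>\<^sub>F (x', y) in uniformity. x' = x \<longrightarrow> y \<in> S)"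

definition sgn_cmat :: "'a cmat \<Rightarrow> 'a cmat" where
  "sgn_cmat x = scaleR (inverse (norm x)) x"

instance
proof
  fix a b c :: "'a cmat" and r s :: real
  show "a * b * c = a * (b * c)" by transfer (simp add: matrix_mul_assoc)
  show "(a + b) * c = a * c + b * c" by transfer (simp add: matrix_add_rdistrib)
  show "a * (b + c) = a * b + a * c" by transfer (simp add: matrix_add_ldistrib)
  show "1 * a = a" by transfer simp
  show "a * 1 = a" by transfer simp
  show "(0::'a cmat) \<noteq> 1" by transfer (auto simp: vec_eq_iff mat_def)
  show "r *\<^sub>R a * b = r *\<^sub>R (a * b)" by transfer (simp add: scalar_matrix_assoc[symmetric])
  show "a * r *\<^sub>R b = r *\<^sub>R (a * b)" by transfer (simp add: matrix_scalar_ac scalar_matrix_assoc[symmetric])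
  show "a + b + c = a + (b + c)" by transfer simp
  show "a + b = b + a" by transfer simp
  show "0 + a = a" by transfer simp
  show "- a + a = 0" by transfer simp
  show "a - b = a + - b" by transfer simp
  show "r *\<^sub>R (a + b) = r *\<^sub>R a + r *\<^sub>R b" by transfer (simp add: scaleR_right_distrib)
  show "(r + s) *\<^sub>R a = r *\<^sub>R a + s *\<^sub>R a" by transfer (simp add: scaleR_left_distrib)
  show "r *\<^sub>R s *\<^sub>R a = (r * s) *\<^sub>R a" by transfer simp
  show "1 *\<^sub>R a = a" by transfer simp
  show "dist a b = norm (a - b)" by (simp add: dist_cmat_def)
  show "sgn a = inverse (norm a) *\<^sub>R a" by (simp add: sgn_cmat_def)
  show "uniformity = (INF e\<in>{0<..}. principal {(x, y). dist (x::'a cmat) y < e})"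
    by (simp add: uniformity_cmat_def)
  show "open U = (\<forall>x\<in>U. \<forall>\<^sub>F (x', y) in uniformity. x' = x \<longrightarrow> y \<in> U)" for U :: "'a cmat set"
    by (simp add: open_cmat_def)
  show "(norm a = 0) = (a = 0)"
    by transfer (simp add: onorm_eq_0[OF bounded_linear_matrix_vector_mult] matrix_eq[of _ 0])
  show "norm (a + b) \<le> norm a + norm b"
  proof transfer
    fix A B :: "complex^'a^'a"
    have "(\<lambda>v. (A + B) *v v) = (\<lambda>v. A *v v + B *v v)"
      by (simp add: matrix_vector_mult_add_rdistrib)
    then show "onorm (\<lambda>v. (A + B) *v v) \<le> onorm (\<lambda>v. A *v v) + onorm (\<lambda>v. B *v v)"
      using onorm_triangle[OF bounded_linear_matrix_vector_mult bounded_linear_matrix_vector_mult]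
      by simp
  qed
  show "norm (r *\<^sub>R a) = \<bar>r\<bar> * norm a"
  proof transfer
    fix r and A :: "complex^'a^'a"
    have "(\<lambda>v. (r *\<^sub>R A) *v v) = (\<lambda>v. r *\<^sub>R (A *v v))"
      by (simp add: scaleR_matrix_vector_mult)
    then show "onorm (\<lambda>v. (r *\<^sub>R A) *v v) = \<bar>r\<bar> * onorm (\<lambda>v. A *v v)"
      using onorm_scaleR[OF bounded_linear_matrix_vector_mult] by simp
  qed
  show "norm (a * b) \<le> norm a * norm b"
  proof transfer
    fix A B :: "complex^'a^'a"
    have "(\<lambda>v. (A ** B) *v v) = (\<lambda>v. A *v v) \<circ> (\<lambda>v. B *v v)"
      by (simp add: o_def matrix_vector_mul_assoc)
    then show "onorm (\<lambda>v. (A ** B) *v v) \<le> onorm (\<lambda>v. A *v v) * onorm (\<lambda>v. B *v v)"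
      using onorm_compose[OF bounded_linear_matrix_vector_mult bounded_linear_matrix_vector_mult]
      by metis
  qed
  show "norm (1::'a cmat) = 1" by transfer (simp add: onorm_id)
qed

end

lemma norm_Rep_cmat_entry_le: "cmod (Rep_cmat x $ i $ j) \<le> norm x"
  by (simp add: norm_cmat.rep_eq norm_entry_le_onorm)

lemma bounded_linear_Rep_cmat: "bounded_linear (Rep_cmat :: 'n::finite cmat \<Rightarrow> _)"
proof
  show "Rep_cmat (x + y) = Rep_cmat x + Rep_cmat y" for x y :: "'n cmat"
    by (simp add: plus_cmat.rep_eq)
  show "Rep_cmat (r *\<^sub>R x) = r *\<^sub>R Rep_cmat x" for r and x :: "'n cmat"
    by (simp add: scaleR_cmat.rep_eq)
  have "norm (Rep_cmat x) \<le> norm x * (CARD('n) * CARD('n))" for x :: "'n cmat"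
  proof -
    have "norm (Rep_cmat x) \<le> (\<Sum>i\<in>UNIV. \<Sum>j\<in>UNIV. cmod (Rep_cmat x $ i $ j))"
      by (rule norm_le_sum_norm_entries)
    also have "\<dots> \<le> (\<Sum>i\<in>(UNIV::'n set). \<Sum>j\<in>(UNIV::'n set). norm x)"
      by (intro sum_mono norm_Rep_cmat_entry_le)
    finally show ?thesis by (simp add: mult_ac)
  qed
  then show "\<exists>K. \<forall>x::'n cmat. norm (Rep_cmat x) \<le> norm x * K" by blast
qed

lemma bounded_linear_Abs_cmat: "bounded_linear (Abs_cmat :: _ \<Rightarrow> 'n::finite cmat)"
proof -
  have "linear (Abs_cmat :: _ \<Rightarrow> 'n cmat)"
    by (rule linearI) (simp_all add: plus_cmat_def scaleR_cmat_def Abs_cmat_inverse)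
  then show ?thesis by (simp add: linear_conv_bounded_linear)
qed

lemma tendsto_cmat_iff: "(f \<longlongrightarrow> l) F \<longleftrightarrow> ((\<lambda>x. Rep_cmat (f x)) \<longlongrightarrow> Rep_cmat l) F"
proof
  assume "(f \<longlongrightarrow> l) F"
  then show "((\<lambda>x. Rep_cmat (f x)) \<longlongrightarrow> Rep_cmat l) F"
    by (rule bounded_linear.tendsto[OF bounded_linear_Rep_cmat])
next
  assume "((\<lambda>x. Rep_cmat (f x)) \<longlongrightarrow> Rep_cmat l) F"
  from bounded_linear.tendsto[OF bounded_linear_Abs_cmat this] show "(f \<longlongrightarrow> l) F"
    by (simp add: Rep_cmat_inverse)
qed

lemma tendsto_cmat_iff_entries:
  "(f \<longlongrightarrow> l) F \<longleftrightarrow> (\<forall>i j. ((\<lambda>x. Rep_cmat (f x) $ i $ j) \<longlongrightarrow> Rep_cmat l $ i $ j) F)"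
  unfolding tendsto_cmat_iff by (auto intro: tendsto_vec_nth vec_tendstoI)

instance cmat :: (finite) banach
proof
  fix X :: "nat \<Rightarrow> 'a cmat"
  assume "Cauchy X"
  then have "convergent (\<lambda>n. Rep_cmat (X n))"
    by (intro Cauchy_convergent bounded_linear.Cauchy[OF bounded_linear_Rep_cmat])
  then obtain L where "(\<lambda>n. Rep_cmat (X n)) \<longlonglongrightarrow> L" unfolding convergent_def by blast
  then have "X \<longlonglongrightarrow> Abs_cmat L" by (simp add: tendsto_cmat_iff Abs_cmat_inverse)
  then show "convergent X" by (rule convergentI)
qed

lemma Rep_cmat_power: "Rep_cmat (x ^ k) = mpow (Rep_cmat x) k"
  by (induction k) (simp_all add: mpow_def one_cmat.rep_eq times_cmat.rep_eq)

lemma mexp_Rep_cmat: "mexp (Rep_cmat x) = Rep_cmat (exp x)"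
proof -
  have "Rep_cmat (exp x) = (\<Sum>k. Rep_cmat (x ^ k /\<^sub>R fact k))"
    unfolding exp_def by (rule bounded_linear.suminf[OF bounded_linear_Rep_cmat summable_exp_generic])
  also have "\<dots> = mexp (Rep_cmat x)"
    by (simp add: mexp_def scaleR_cmat.rep_eq Rep_cmat_power inverse_eq_divide)
  finally show ?thesis by simp
qed


lift_definition cmat_scalar :: "complex \<Rightarrow> 'n::finite cmat" is mat .

lemma Rep_cmat_scalar_mult: "Rep_cmat (cmat_scalar c * x) $ i $ j = c * Rep_cmat x $ i $ j"
proof -
  have "(\<Sum>k\<in>UNIV. mat c $ i $ k * Rep_cmat x $ k $ j) = (\<Sum>k\<in>UNIV. if k = i then c * Rep_cmat x $ k $ j else 0)"
    by (rule sum.cong) (auto simp: mat_def)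
  then show ?thesis by (simp add: times_cmat.rep_eq cmat_scalar.rep_eq matrix_matrix_mult_def)
qed

lemma Rep_cmat_mult_scalar: "Rep_cmat (x * cmat_scalar c) $ i $ j = c * Rep_cmat x $ i $ j"
proof -
  have "(\<Sum>k\<in>UNIV. Rep_cmat x $ i $ k * mat c $ k $ j) = (\<Sum>k\<in>UNIV. if k = j then c * Rep_cmat x $ i $ k else 0)"
    by (rule sum.cong) (auto simp: mat_def)
  then show ?thesis by (simp add: times_cmat.rep_eq cmat_scalar.rep_eq matrix_matrix_mult_def)
qed

lemma cmat_scalar_1 [simp]: "cmat_scalar 1 = 1"
  by transfer simp

lemma cmat_scalar_commute: "cmat_scalar c * x = x * cmat_scalar c"
  by (simp add: Rep_cmat_inject[symmetric] vec_eq_iff Rep_cmat_scalar_mult Rep_cmat_mult_scalar)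

lemma cmat_scalar_mult: "cmat_scalar (a * b) = cmat_scalar a * cmat_scalar b"
  by (simp add: Rep_cmat_inject[symmetric] vec_eq_iff Rep_cmat_scalar_mult)
    (simp add: cmat_scalar.rep_eq mat_def)

lemma norm_cmat_scalar_mult_le:
  fixes x :: "'n::finite cmat"
  shows "norm (cmat_scalar c * x) \<le> cmod c * norm x"
proof -
  have "mat c *v v = (\<chi> i. c * v $ i)" for v :: "complex^'n"
  proof -
    have "(\<Sum>j\<in>UNIV. mat c $ i $ j * v $ j) = (\<Sum>j\<in>UNIV. if j = i then c * v $ j else 0)" for i
      by (rule sum.cong) (auto simp: mat_def)
    then show ?thesis by (simp add: vec_eq_iff matrix_vector_mult_def)
  qed
  moreover have "norm (\<chi> i. c * v $ i) = cmod c * norm v" for v :: "complex^'n"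
    by (simp add: norm_vec_def norm_mult L2_set_right_distrib)
  ultimately have "onorm (\<lambda>v::complex^'n. mat c *v v) \<le> cmod c"
    by (intro onorm_le) simp
  then have "norm (cmat_scalar c :: 'n cmat) \<le> cmod c"
    by (simp add: norm_cmat.rep_eq cmat_scalar.rep_eq)
  then show ?thesis
    by (meson norm_ge_zero norm_mult_ineq mult_right_mono order_trans)
qed

section \<open>Local estimates for the exponential of a Banach algebra\<close>

lemma norm_power_diff_le:
  fixes a b :: "'a::real_normed_algebra_1"
  assumes "norm a \<le> m" "norm b \<le> m"
  shows "norm (a ^ k - b ^ k) \<le> real k * m ^ (k - 1) * norm (a - b)"
proof (induction k)
  case 0
  then show ?case by simp
next
  case (Suc k)
  have m: "0 \<le> m" using assms(1) norm_ge_zero order_trans by blast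
  have "norm (a * (a ^ k - b ^ k)) \<le> m * (real k * m ^ (k - 1) * norm (a - b))"
    using norm_mult_ineq[of a "a ^ k - b ^ k"] Suc.IH assms(1)
    by (meson mult_mono m norm_ge_zero order_trans)
  also have "\<dots> = real k * m ^ k * norm (a - b)"
    by (cases k) (simp_all add: algebra_simps)
  finally have 1: "norm (a * (a ^ k - b ^ k)) \<le> real k * m ^ k * norm (a - b)" .
  have "norm ((a - b) * b ^ k) \<le> norm (a - b) * norm (b ^ k)" by (rule norm_mult_ineq)
  also have "\<dots> \<le> norm (a - b) * m ^ k"
    using norm_power_ineq[of b k] power_mono[OF assms(2) norm_ge_zero, of k]
    by (intro mult_left_mono) auto
  finally have 2: "norm ((a - b) * b ^ k) \<le> m ^ k * norm (a - b)" by (simp add: mult.commute)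
  have "a ^ Suc k - b ^ Suc k = a * (a ^ k - b ^ k) + (a - b) * b ^ k"
    by (simp add: algebra_simps)
  then have "norm (a ^ Suc k - b ^ Suc k) \<le> real k * m ^ k * norm (a - b) + m ^ k * norm (a - b)"
    using norm_triangle_le[OF add_mono[OF 1 2]] by simp
  then show ?case by (simp add: algebra_simps)
qed

text \<open>Termwise comparison of the two exponential series with the series of \<open>exp m - 1\<close>,
  the term of degree \<open>n\<close> being bounded by \<open>norm_power_diff_le\<close>.\<close>

lemma norm_exp_diff_sub_le:
  fixes a b :: "'a::{real_normed_algebra_1,banach}"
  assumes a: "norm a \<le> m" and b: "norm b \<le> m"
  shows "norm (exp a - exp b - (a - b)) \<le> (exp m - 1) * norm (a - b)"
proof -
  define d where "d n = (a ^ n - b ^ n) /\<^sub>R fact n" for n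
  define c where "c n = m ^ Suc n /\<^sub>R fact (Suc n)" for n
  have "d sums (exp a - exp b)"
    unfolding d_def scaleR_diff_right by (intro sums_diff exp_converges)
  then have "(\<lambda>n. d (Suc n)) sums (exp a - exp b - d 0)"
    by (simp add: sums_Suc_iff)
  then have "(\<lambda>n. d (Suc (Suc n))) sums (exp a - exp b - d 0 - d 1)"
    using sums_Suc_iff[of "\<lambda>n. d (Suc n)"] by simp
  then have ds: "(\<lambda>n. d (Suc (Suc n))) sums (exp a - exp b - (a - b))"
    by (simp add: d_def)
  have "(\<lambda>n. m ^ n /\<^sub>R fact n) sums exp m" by (rule exp_converges)
  then have "c sums (exp m - 1)"
    unfolding c_def using sums_Suc_iff[of "\<lambda>n. m ^ n /\<^sub>R fact n" "exp m - 1"] by simp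
  then have cs: "(\<lambda>n. c n * norm (a - b)) sums ((exp m - 1) * norm (a - b))"
    by (rule sums_mult2)
  have le: "norm (d (Suc (Suc n))) \<le> c n * norm (a - b)" for n
  proof -
    have "norm (d (Suc (Suc n))) = norm (a ^ Suc (Suc n) - b ^ Suc (Suc n)) / fact (Suc (Suc n))"
      by (simp add: d_def divide_inverse mult.commute del: fact_Suc power_Suc)
    also have "\<dots> \<le> (real (Suc (Suc n)) * m ^ Suc n * norm (a - b)) / fact (Suc (Suc n))"
      using norm_power_diff_le[OF a b, of "Suc (Suc n)"] by (intro divide_right_mono) auto
    also have "\<dots> = c n * norm (a - b)"
      unfolding c_def by (simp add: field_simps del: of_nat_Suc)
    finally show ?thesis .
  qed
  have sn: "summable (\<lambda>n. norm (d (Suc (Suc n))))"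
    by (rule summable_comparison_test[OF _ sums_summable[OF cs]]) (auto intro!: exI[of _ 0] le)
  have "norm (exp a - exp b - (a - b)) = norm (\<Sum>n. d (Suc (Suc n)))"
    using ds by (simp add: sums_iff)
  also have "\<dots> \<le> (\<Sum>n. norm (d (Suc (Suc n))))" by (rule summable_norm[OF sn])
  also have "\<dots> \<le> (\<Sum>n. c n * norm (a - b))" by (rule suminf_le[OF le sn sums_summable[OF cs]])
  also have "\<dots> = (exp m - 1) * norm (a - b)" using cs by (simp add: sums_iff)
  finally show ?thesis .
qed

lemma inj_on_exp_cball:
  "inj_on (exp :: 'a::{real_normed_algebra_1,banach} \<Rightarrow> 'a) (cball 0 (1/2))"
proof (rule inj_onI)
  fix a b :: 'a
  assume "a \<in> cball 0 (1/2)" "b \<in> cball 0 (1/2)" "exp a = exp b"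
  then have "norm (a - b) \<le> (exp (1/2) - 1) * norm (a - b)"
    using norm_exp_diff_sub_le[of a "1/2" b] by (simp add: norm_minus_commute)
  moreover have "exp (1/2::real) - 1 < 1"
    using exp_bound[of "1/2::real"] by (simp add: power2_eq_square)
  ultimately have "\<not> 0 < norm (a - b)"
    by (simp add: mult_le_cancel_right1)
  then show "a = b" by simp
qed

section \<open>Complex derivatives of matrix-valued functions\<close>

definition cmat_diff_quot :: "(complex \<Rightarrow> 'n::finite cmat) \<Rightarrow> complex \<Rightarrow> complex \<Rightarrow> 'n cmat" where
  "cmat_diff_quot F x y = cmat_scalar (inverse (y - x)) * (F y - F x)"

definition has_cmat_deriv :: "(complex \<Rightarrow> 'n::finite cmat) \<Rightarrow> 'n cmat \<Rightarrow> complex \<Rightarrow> bool" where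
  "has_cmat_deriv F D x \<longleftrightarrow> (cmat_diff_quot F x \<longlongrightarrow> D) (at x)"

lemma has_cmat_deriv_iff_entries:
  "has_cmat_deriv F D x \<longleftrightarrow>
     (\<forall>i j. ((\<lambda>y. Rep_cmat (F y) $ i $ j) has_field_derivative Rep_cmat D $ i $ j) (at x))"
proof -
  have "Rep_cmat (cmat_diff_quot F x y) $ i $ j = (Rep_cmat (F y) $ i $ j - Rep_cmat (F x) $ i $ j) / (y - x)"
    for y i j
    by (simp add: cmat_diff_quot_def Rep_cmat_scalar_mult minus_cmat.rep_eq divide_inverse mult.commute)
  then show ?thesis
    unfolding has_cmat_deriv_def tendsto_cmat_iff_entries has_field_derivative_iff by simp
qed

lemma has_cmat_deriv_imp_isCont: "has_cmat_deriv F D x \<Longrightarrow> isCont F x"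
proof -
  assume "has_cmat_deriv F D x"
  then have "\<forall>i j. isCont (\<lambda>y. Rep_cmat (F y) $ i $ j) x"
    unfolding has_cmat_deriv_iff_entries by (blast intro: DERIV_isCont)
  then show ?thesis
    unfolding isCont_def tendsto_cmat_iff_entries by blast
qed

lemma has_cmat_deriv_const: "has_cmat_deriv (\<lambda>y. c) 0 x"
  unfolding has_cmat_deriv_iff_entries by (simp add: zero_cmat.rep_eq)

lemma has_cmat_deriv_diff:
  "has_cmat_deriv F D x \<Longrightarrow> has_cmat_deriv G E x \<Longrightarrow> has_cmat_deriv (\<lambda>y. F y - G y) (D - E) x"
  unfolding has_cmat_deriv_iff_entries by (auto simp: minus_cmat.rep_eq intro!: derivative_intros)

lemma has_cmat_deriv_minus: "has_cmat_deriv F D x \<Longrightarrow> has_cmat_deriv (\<lambda>y. - F y) (- D) x"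
  unfolding has_cmat_deriv_iff_entries by (auto simp: uminus_cmat.rep_eq intro!: derivative_intros)

lemma Rep_cmat_mult_entry: "Rep_cmat (a * b) $ i $ j = (\<Sum>k\<in>UNIV. Rep_cmat a $ i $ k * Rep_cmat b $ k $ j)"
  by (simp add: times_cmat.rep_eq matrix_matrix_mult_def)

lemma has_cmat_deriv_mult:
  assumes "has_cmat_deriv F D x" "has_cmat_deriv G E x"
  shows "has_cmat_deriv (\<lambda>y. F y * G y) (D * G x + F x * E) x"
  unfolding has_cmat_deriv_iff_entries
proof (intro allI)
  fix i j
  have "((\<lambda>y. \<Sum>k\<in>UNIV. Rep_cmat (F y) $ i $ k * Rep_cmat (G y) $ k $ j) has_field_derivative
        (\<Sum>k\<in>UNIV. Rep_cmat (F x) $ i $ k * Rep_cmat E $ k $ j + Rep_cmat D $ i $ k * Rep_cmat (G x) $ k $ j)) (at x)"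
    using assms unfolding has_cmat_deriv_iff_entries by (intro DERIV_sum DERIV_mult') auto
  then show "((\<lambda>y. Rep_cmat (F y * G y) $ i $ j) has_field_derivative Rep_cmat (D * G x + F x * E) $ i $ j) (at x)"
    by (simp add: Rep_cmat_mult_entry plus_cmat.rep_eq sum.distrib add.commute)
qed

lemma has_cmat_deriv_mult_left: "has_cmat_deriv F D x \<Longrightarrow> has_cmat_deriv (\<lambda>y. A * F y) (A * D) x"
  using has_cmat_deriv_mult[OF has_cmat_deriv_const, of F D x A] by simp

lemma has_cmat_deriv_zero_imp_constant:
  assumes "open S" "connected S" "\<And>x. x \<in> S \<Longrightarrow> has_cmat_deriv F 0 x" "a \<in> S" "b \<in> S"
  shows "F a = F b"
proof -
  have "Rep_cmat (F a) $ i $ j = Rep_cmat (F b) $ i $ j" for i j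
  proof -
    have d: "\<forall>x\<in>S - {}. ((\<lambda>y. Rep_cmat (F y) $ i $ j) has_field_derivative 0) (at x)"
      using assms(3) unfolding has_cmat_deriv_iff_entries by (simp add: zero_cmat.rep_eq)
    then have "continuous_on S (\<lambda>y. Rep_cmat (F y) $ i $ j)"
      by (auto intro!: continuous_at_imp_continuous_on DERIV_isCont)
    then obtain c where "\<And>x. x \<in> S \<Longrightarrow> Rep_cmat (F x) $ i $ j = c"
      using DERIV_zero_connected_constant[OF assms(2,1) finite.emptyI _ d] by blast
    then show ?thesis using assms(4,5) by simp
  qed
  then show ?thesis by (simp add: Rep_cmat_inject[symmetric] vec_eq_iff)
qed

lemma has_cmat_deriv_commute:
  assumes "has_cmat_deriv F D x" "open S" "x \<in> S" "\<And>y. y \<in> S \<Longrightarrow> F y * A = A * F y"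
  shows "D * A = A * D"
proof -
  have "eventually (\<lambda>y. y \<in> S) (at x)"
    using assms(2,3) by (simp add: eventually_at_topological) blast
  then have "eventually (\<lambda>y. A * cmat_diff_quot F x y = cmat_diff_quot F x y * A) (at x)"
  proof (rule eventually_mono)
    fix y assume "y \<in> S"
    then have "(F y - F x) * A = A * (F y - F x)"
      using assms(3,4) by (simp add: algebra_simps)
    then show "A * cmat_diff_quot F x y = cmat_diff_quot F x y * A"
      unfolding cmat_diff_quot_def by (metis mult.assoc cmat_scalar_commute)
  qed
  moreover have "((\<lambda>y. A * cmat_diff_quot F x y) \<longlongrightarrow> A * D) (at x)"
    using assms(1) unfolding has_cmat_deriv_def by (intro tendsto_intros)
  ultimately have "((\<lambda>y. cmat_diff_quot F x y * A) \<longlongrightarrow> A * D) (at x)"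
    by (rule Lim_transform_eventually[rotated])
  moreover have "((\<lambda>y. cmat_diff_quot F x y * A) \<longlongrightarrow> D * A) (at x)"
    using assms(1) unfolding has_cmat_deriv_def by (intro tendsto_intros)
  ultimately show ?thesis using tendsto_unique[OF at_neq_bot] by metis
qed

lemma norm_diff_le_norm_cmat_diff_quot:
  "cmod (inverse (y - x)) * norm (F y - F x) \<le> norm (cmat_diff_quot F x y)"
proof (cases "y = x")
  case False
  then have "F y - F x = cmat_scalar (y - x) * cmat_diff_quot F x y"
    by (simp add: cmat_diff_quot_def mult.assoc[symmetric] cmat_scalar_mult[symmetric])
  then have "norm (F y - F x) \<le> cmod (y - x) * norm (cmat_diff_quot F x y)"
    by (metis norm_cmat_scalar_mult_le)
  moreover have "0 < cmod (y - x)"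
    using False by simp
  ultimately have "norm (F y - F x) / cmod (y - x) \<le> norm (cmat_diff_quot F x y)"
    by (simp add: pos_divide_le_eq mult.commute)
  then show ?thesis
    by (simp add: norm_inverse divide_inverse mult.commute)
qed simp

text \<open>By \<open>norm_exp_diff_sub_le\<close> with \<open>b = 0\<close> the remainder is at most \<open>exp \<parallel>X y - X x\<parallel> - 1\<close>
  times the norm of the difference quotient.\<close>

lemma tendsto_exp_remainder_quot:
  fixes X :: "complex \<Rightarrow> 'n::finite cmat"
  assumes X: "has_cmat_deriv X D x"
  shows "((\<lambda>y. cmat_scalar (inverse (y - x)) * (exp (X y - X x) - 1 - (X y - X x))) \<longlongrightarrow> 0) (at x)"
proof -
  define B where "B y = (exp (norm (X y - X x)) - 1) * norm (cmat_diff_quot X x y)" for y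
  have "(X \<longlongrightarrow> X x) (at x)"
    using has_cmat_deriv_imp_isCont[OF X] by (simp add: isCont_def)
  then have "(B \<longlongrightarrow> (exp (norm (X x - X x)) - 1) * norm D) (at x)"
    unfolding B_def using X unfolding has_cmat_deriv_def by (intro tendsto_intros)
  then have B: "(B \<longlongrightarrow> 0) (at x)"
    by simp
  have "\<forall>y. norm (cmat_scalar (inverse (y - x)) * (exp (X y - X x) - 1 - (X y - X x))) \<le> B y"
  proof
    fix y
    let ?\<Delta> = "X y - X x"
    have "norm (exp ?\<Delta> - 1 - ?\<Delta>) \<le> (exp (norm ?\<Delta>) - 1) * norm ?\<Delta>"
      using norm_exp_diff_sub_le[of ?\<Delta> "norm ?\<Delta>" 0] by simp
    then have "norm (cmat_scalar (inverse (y - x)) * (exp ?\<Delta> - 1 - ?\<Delta>))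
        \<le> cmod (inverse (y - x)) * ((exp (norm ?\<Delta>) - 1) * norm ?\<Delta>)"
      by (meson norm_cmat_scalar_mult_le norm_ge_zero mult_left_mono order_trans)
    also have "\<dots> = (exp (norm ?\<Delta>) - 1) * (cmod (inverse (y - x)) * norm ?\<Delta>)"
      by (simp add: algebra_simps)
    also have "\<dots> \<le> B y"
      unfolding B_def by (rule mult_left_mono[OF norm_diff_le_norm_cmat_diff_quot]) simp
    finally show "norm (cmat_scalar (inverse (y - x)) * (exp ?\<Delta> - 1 - ?\<Delta>)) \<le> B y" .
  qed
  then show ?thesis
    using B by (rule Lim_null_comparison[OF always_eventually])
qed

text \<open>Near \<open>x\<close>, \<open>exp (X y) = exp (X x) * exp (X y - X x)\<close> because the values commute.\<close>

lemma has_cmat_deriv_exp: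
  fixes X :: "complex \<Rightarrow> 'n::finite cmat"
  assumes X: "has_cmat_deriv X D x" and S: "open S" "x \<in> S"
    and commute: "\<And>y. y \<in> S \<Longrightarrow> X y * X x = X x * X y"
  shows "has_cmat_deriv (\<lambda>y. exp (X y)) (exp (X x) * D) x"
proof -
  define R where "R y = cmat_scalar (inverse (y - x)) * (exp (X y - X x) - 1 - (X y - X x))" for y
  have "eventually (\<lambda>y. y \<in> S) (at x)"
    using S by (simp add: eventually_at_topological) blast
  then have eq: "eventually (\<lambda>y. exp (X x) * (cmat_diff_quot X x y + R y) = cmat_diff_quot (\<lambda>y. exp (X y)) x y) (at x)"
  proof (rule eventually_mono)
    fix y assume "y \<in> S"
    then have "X x * (X y - X x) = (X y - X x) * X x"
      using commute[OF \<open>y \<in> S\<close>] by (simp add: algebra_simps)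
    then have "exp (X y) = exp (X x) * exp (X y - X x)"
      using exp_add_commuting[of "X x" "X y - X x"] by simp
    then have "cmat_diff_quot (\<lambda>y. exp (X y)) x y
        = cmat_scalar (inverse (y - x)) * (exp (X x) * (exp (X y - X x) - 1))"
      by (simp add: cmat_diff_quot_def right_diff_distrib)
    also have "\<dots> = exp (X x) * (cmat_scalar (inverse (y - x)) * (exp (X y - X x) - 1))"
      by (simp only: mult.assoc[symmetric] cmat_scalar_commute[of _ "exp (X x)"])
    also have "\<dots> = exp (X x) * (cmat_diff_quot X x y + R y)"
      by (simp add: R_def cmat_diff_quot_def algebra_simps)
    finally show "exp (X x) * (cmat_diff_quot X x y + R y) = cmat_diff_quot (\<lambda>y. exp (X y)) x y"
      by simp
  qed
  have "((\<lambda>y. exp (X x) * (cmat_diff_quot X x y + R y)) \<longlongrightarrow> exp (X x) * (D + 0)) (at x)"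
    using X tendsto_exp_remainder_quot[OF X] unfolding has_cmat_deriv_def R_def
    by (intro tendsto_intros)
  from Lim_transform_eventually[OF this eq] show ?thesis
    unfolding has_cmat_deriv_def by simp
qed


section \<open>Determinants, inverses and holomorphy of matrix functions\<close>

lemma matrix_inv_det_nz:
  fixes A :: "'a::field^'n^'n"
  assumes "det A \<noteq> 0"
  shows "A ** matrix_inv A = mat 1" "matrix_inv A ** A = mat 1"
proof -
  have "\<exists>A'. A ** A' = mat 1 \<and> A' ** A = mat 1"
    using assms invertible_det_nz unfolding invertible_def by blast
  then have "A ** matrix_inv A = mat 1 \<and> matrix_inv A ** A = mat 1"
    unfolding matrix_inv_def by (rule someI_ex)
  then show "A ** matrix_inv A = mat 1" "matrix_inv A ** A = mat 1" by auto
qed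

lemma matrix_inv_cramer:
  fixes A :: "'a::field^'n^'n"
  assumes "det A \<noteq> 0"
  shows "matrix_inv A $ k $ j = det (\<chi> i l. if l = k then axis j 1 $ i else A $ i $ l) / det A"
proof -
  have "A *v (matrix_inv A *v axis j 1) = axis j 1"
    by (simp add: matrix_vector_mul_assoc matrix_inv_det_nz[OF assms])
  then have "(matrix_inv A *v axis j 1) $ k = det (\<chi> i l. if l = k then axis j 1 $ i else A $ i $ l) / det A"
    using cramer[OF assms] by simp
  moreover have "(matrix_inv A *v axis j 1) $ k = matrix_inv A $ k $ j"
    by (simp add: matrix_vector_mult_def axis_def if_distrib cong: if_cong)
  ultimately show ?thesis by simp
qed

lemma det_matrix_inv:
  fixes A :: "'a::field^'n^'n"
  assumes "det A \<noteq> 0"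
  shows "det (matrix_inv A) = inverse (det A)"
  using det_mul[of A "matrix_inv A"] matrix_inv_det_nz(1)[OF assms] assms
  by (simp add: field_simps)

lemma tendsto_det [tendsto_intros]:
  "(M \<longlongrightarrow> M0) F \<Longrightarrow> ((\<lambda>x. det (M x :: 'a::{real_normed_field}^'n^'n)) \<longlongrightarrow> det M0) F"
  unfolding det_def by (intro tendsto_intros)

lemma tendsto_matrix_inv:
  fixes M :: "_ \<Rightarrow> complex^'n^'n"
  assumes M: "(M \<longlongrightarrow> M0) F" and det: "det M0 \<noteq> 0"
  shows "((\<lambda>x. matrix_inv (M x)) \<longlongrightarrow> matrix_inv M0) F"
proof (rule vec_tendstoI, rule vec_tendstoI)
  fix k j
  define C where "C A = (\<chi> i l. if l = k then axis j 1 $ i else A $ i $ l)" for A :: "complex^'n^'n"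
  have "((\<lambda>x. det (C (M x)) / det (M x)) \<longlongrightarrow> det (C M0) / det M0) F"
    unfolding C_def using M det by (intro tendsto_intros) (auto intro!: tendsto_vec_nth)
  moreover have "eventually (\<lambda>x. det (M x) \<noteq> 0) F"
    using tendsto_det[OF M] det by (rule tendsto_imp_eventually_ne)
  then have "eventually (\<lambda>x. det (C (M x)) / det (M x) = matrix_inv (M x) $ k $ j) F"
    by (rule eventually_mono) (simp add: matrix_inv_cramer C_def)
  ultimately show "((\<lambda>x. matrix_inv (M x) $ k $ j) \<longlongrightarrow> matrix_inv M0 $ k $ j) F"
    by (simp add: Lim_transform_eventually matrix_inv_cramer[OF det] C_def)
qed

lemma norm_det_le:
  fixes X :: "complex^'n^'n"
  shows "cmod (det X) \<le> real (card {p. p permutes (UNIV::'n set)}) * norm X ^ CARD('n)"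
proof -
  have "cmod (det X) \<le> (\<Sum>p | p permutes (UNIV::'n set). \<Prod>i\<in>UNIV. cmod (X $ i $ p i))"
    unfolding det_def by (rule order_trans[OF norm_sum sum_mono]) (simp add: norm_mult prod_norm sign_def)
  also have "\<dots> \<le> (\<Sum>p | p permutes (UNIV::'n set). norm X ^ CARD('n))"
  proof (rule sum_mono)
    fix p :: "'n \<Rightarrow> 'n"
    have "(\<Prod>i\<in>UNIV. cmod (X $ i $ p i)) \<le> (\<Prod>i\<in>(UNIV::'n set). norm X)"
      by (rule prod_mono)
        (auto intro: order_trans[OF Finite_Cartesian_Product.norm_nth_le Finite_Cartesian_Product.norm_nth_le])
    then show "(\<Prod>i\<in>UNIV. cmod (X $ i $ p i)) \<le> norm X ^ CARD('n)" by simp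
  qed
  finally show ?thesis by simp
qed

lemma filterlim_at_infinity_if_det:
  fixes M :: "_ \<Rightarrow> complex^'n^'n"
  assumes "filterlim (\<lambda>x. det (M x)) at_infinity F"
  shows "filterlim M at_infinity F"
  unfolding filterlim_at_infinity[OF order_refl]
proof (intro allI impI)
  define K where "K = real (card {p. p permutes (UNIV::'n set)})"
  have "K \<ge> 1"
    using finite_permutations[of "UNIV::'n set"] permutes_id[of "UNIV::'n set"]
    by (auto simp: K_def Suc_le_eq card_gt_0_iff intro!: exI[of _ id])
  fix r :: real assume "r > 0"
  then have "0 \<le> K * r ^ CARD('n)"
    using \<open>K \<ge> 1\<close> by simp
  then have "eventually (\<lambda>x. K * r ^ CARD('n) + 1 \<le> norm (det (M x))) F"
    using assms unfolding filterlim_at_infinity[OF order_refl] by simp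
  then show "eventually (\<lambda>x. r \<le> norm (M x)) F"
  proof (rule eventually_mono)
    fix x assume "K * r ^ CARD('n) + 1 \<le> norm (det (M x))"
    then have "K * r ^ CARD('n) < K * norm (M x) ^ CARD('n)"
      using norm_det_le[of "M x"] unfolding K_def by linarith
    then have "r ^ CARD('n) < norm (M x) ^ CARD('n)" using \<open>K \<ge> 1\<close> by simp
    then show "r \<le> norm (M x)" using power_less_imp_less_base[of r _ "norm (M x)"] by force
  qed
qed

lemma mholo_on_mult: "mholo_on f S \<Longrightarrow> mholo_on g S \<Longrightarrow> mholo_on (\<lambda>w. f w ** g w) S"
  unfolding mholo_on_def matrix_matrix_mult_def by (auto intro!: holomorphic_intros)

lemma mholo_on_eq_at_point:
  assumes "mholo_on f S" "mholo_on g S" "open S" "x \<in> S" "\<And>v. v \<in> S \<Longrightarrow> v \<noteq> x \<Longrightarrow> f v = g v"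
  shows "f x = g x"
proof -
  have "f x $ i $ j = g x $ i $ j" for i j
  proof -
    have "continuous_on S (\<lambda>v. f v $ i $ j)" "continuous_on S (\<lambda>v. g v $ i $ j)"
      using assms(1,2) by (simp_all add: mholo_on_def holomorphic_on_imp_continuous_on)
    then have f: "((\<lambda>v. f v $ i $ j) \<longlongrightarrow> f x $ i $ j) (at x)"
      and g: "((\<lambda>v. g v $ i $ j) \<longlongrightarrow> g x $ i $ j) (at x)"
      using assms(3,4) by (simp_all add: continuous_on_eq_continuous_at isCont_def)
    have "eventually (\<lambda>v. f v $ i $ j = g v $ i $ j) (at x)"
      unfolding eventually_at_topological using assms(3,4,5) by auto
    from Lim_transform_eventually[OF f this] show ?thesis
      using tendsto_unique[OF at_neq_bot _ g] by blast
  qed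
  then show ?thesis by (simp add: vec_eq_iff)
qed

lemma mholo_on_mderiv: "mholo_on f S \<Longrightarrow> open S \<Longrightarrow> mholo_on (mderiv f) S"
  unfolding mholo_on_def mderiv_def by (simp add: holomorphic_deriv)

lemma mderiv_compose_inverse:
  assumes "\<And>i j. ((\<lambda>v. f v $ i $ j) has_field_derivative D $ i $ j) (at (inverse w))" "w \<noteq> 0"
  shows "mderiv (\<lambda>v. f (inverse v)) w $ i $ j = - (inverse w)\<^sup>2 * D $ i $ j"
proof -
  have "deriv (\<lambda>v. f (inverse v) $ i $ j) w = D $ i $ j * - (inverse w ^ Suc (Suc 0))"
    by (rule DERIV_imp_deriv[OF DERIV_chain2[OF assms(1) DERIV_inverse[OF assms(2)]]])
  then show ?thesis
    by (simp add: mderiv_def mult.commute power2_eq_square)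
qed

lemma holomorphic_on_det: "mholo_on f S \<Longrightarrow> (\<lambda>w. det (f w)) holomorphic_on S"
  unfolding mholo_on_def det_def by (intro holomorphic_intros) auto

lemma mholo_on_matrix_inv:
  assumes "mholo_on f S" "\<And>w. w \<in> S \<Longrightarrow> det (f w) \<noteq> 0"
  shows "mholo_on (\<lambda>w. matrix_inv (f w)) S"
  unfolding mholo_on_def
proof (intro allI)
  fix k j
  have "mholo_on (\<lambda>w. \<chi> i l. if l = k then axis j 1 $ i else f w $ i $ l) S"
    unfolding mholo_on_def
  proof (intro allI)
    fix i l
    show "(\<lambda>w. (\<chi> i l. if l = k then axis j 1 $ i else f w $ i $ l) $ i $ l) holomorphic_on S"
      using assms(1) by (cases "l = k") (simp_all add: mholo_on_def)
  qed
  then have "(\<lambda>w. det (\<chi> i l. if l = k then axis j 1 $ i else f w $ i $ l) / det (f w)) holomorphic_on S"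
    using assms by (intro holomorphic_intros holomorphic_on_det) auto
  then show "(\<lambda>w. matrix_inv (f w) $ k $ j) holomorphic_on S"
    by (rule holomorphic_transform) (simp add: matrix_inv_cramer assms(2))
qed


section \<open>Logarithms of commuting matrix functions on star-shaped domains\<close>

definition cmat_deriv :: "(complex \<Rightarrow> 'n::finite cmat) \<Rightarrow> complex \<Rightarrow> 'n cmat" where
  "cmat_deriv F w = Abs_cmat (mderiv (\<lambda>v. Rep_cmat (F v)) w)"

definition cmat_inv :: "'n::finite cmat \<Rightarrow> 'n cmat" where
  "cmat_inv X = Abs_cmat (matrix_inv (Rep_cmat X))"

lemma cmat_inv_mult:
  assumes "det (Rep_cmat X) \<noteq> 0"
  shows "cmat_inv X * X = 1" "X * cmat_inv X = 1"
  using matrix_inv_det_nz[OF assms]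
  by (simp_all add: cmat_inv_def Rep_cmat_inject[symmetric] times_cmat.rep_eq one_cmat.rep_eq
      Abs_cmat_inverse)

lemma mholo_on_imp_has_cmat_deriv:
  "mholo_on (\<lambda>w. Rep_cmat (F w)) S \<Longrightarrow> open S \<Longrightarrow> w \<in> S \<Longrightarrow> has_cmat_deriv F (cmat_deriv F w) w"
  unfolding has_cmat_deriv_iff_entries mholo_on_def cmat_deriv_def mderiv_def
  by (auto simp: Abs_cmat_inverse intro!: holomorphic_derivI)

lemma has_cmat_deriv_imp_mholo_on:
  assumes "\<And>w. w \<in> S \<Longrightarrow> has_cmat_deriv F (D w) w" "open S"
  shows "mholo_on (\<lambda>w. Rep_cmat (F w)) S"
  using assms unfolding mholo_on_def holomorphic_on_open[OF assms(2)] has_cmat_deriv_iff_entries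
  by blast

lemma commute_inverse:
  fixes a b b' :: "'a::monoid_mult"
  assumes "a * b = b * a" "b' * b = 1" "b * b' = 1"
  shows "a * b' = b' * a"
proof -
  have "b' * a = b' * a * (b * b')" by (simp add: assms)
  also have "\<dots> = b' * (a * b) * b'" by (simp add: mult.assoc)
  also have "\<dots> = b' * (b * a) * b'" by (simp add: assms)
  also have "\<dots> = (b' * b) * a * b'" by (simp add: mult.assoc)
  finally show ?thesis by (simp add: assms)
qed

locale starlike_matrix_log =
  fixes S :: "complex set" and h :: "complex \<Rightarrow> 'n::finite cmat"
  assumes open_S: "open S" and starlike_S: "starlike S" and zero_in_S: "0 \<in> S"
    and holo_h: "mholo_on (\<lambda>w. Rep_cmat (h w)) S"
    and det_h: "\<And>w. w \<in> S \<Longrightarrow> det (Rep_cmat (h w)) \<noteq> 0"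
    and h_0: "h 0 = 1"
    and h_commute: "\<And>v w. v \<in> S \<Longrightarrow> w \<in> S \<Longrightarrow> h v * h w = h w * h v"
begin

definition log_deriv :: "complex \<Rightarrow> 'n cmat" where
  "log_deriv w = cmat_inv (h w) * cmat_deriv h w"

lemma connected_S: "connected S"
  using starlike_S by (rule starlike_imp_connected)

lemma has_cmat_deriv_h: "w \<in> S \<Longrightarrow> has_cmat_deriv h (cmat_deriv h w) w"
  by (rule mholo_on_imp_has_cmat_deriv[OF holo_h open_S])

lemma h_deriv_commute: "v \<in> S \<Longrightarrow> w \<in> S \<Longrightarrow> cmat_deriv h w * h v = h v * cmat_deriv h w"
  by (rule has_cmat_deriv_commute[OF has_cmat_deriv_h open_S]) (auto intro: h_commute)

lemma log_deriv_commute: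
  assumes "w \<in> S" "A * h w = h w * A" "A * cmat_deriv h w = cmat_deriv h w * A"
  shows "A * log_deriv w = log_deriv w * A"
proof -
  have "A * cmat_inv (h w) = cmat_inv (h w) * A"
    by (rule commute_inverse[OF assms(2) cmat_inv_mult[OF det_h[OF assms(1)]]])
  then show ?thesis unfolding log_deriv_def by (metis assms(3) mult.assoc)
qed

lemma log_deriv_mult_h:
  assumes "w \<in> S"
  shows "log_deriv w * h w = cmat_deriv h w"
proof -
  have "log_deriv w * h w = cmat_inv (h w) * (cmat_deriv h w * h w)"
    by (simp add: log_deriv_def mult.assoc)
  also have "\<dots> = (cmat_inv (h w) * h w) * cmat_deriv h w"
    by (simp add: h_deriv_commute assms mult.assoc)
  finally show ?thesis
    by (simp add: cmat_inv_mult det_h assms)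
qed

lemma Rep_log_deriv:
  "Rep_cmat (log_deriv w) = matrix_inv (Rep_cmat (h w)) ** mderiv (\<lambda>v. Rep_cmat (h v)) w"
  by (simp add: log_deriv_def cmat_inv_def cmat_deriv_def times_cmat.rep_eq Abs_cmat_inverse)

lemma mholo_on_log_deriv: "mholo_on (\<lambda>w. Rep_cmat (log_deriv w)) S"
  unfolding Rep_log_deriv
  using holo_h det_h open_S by (simp add: mholo_on_mult mholo_on_matrix_inv mholo_on_mderiv)

lemma exists_primitive_log_deriv: "\<exists>L. (\<forall>w\<in>S. has_cmat_deriv L (log_deriv w) w) \<and> L 0 = 0"
proof -
  have "\<exists>G. \<forall>w\<in>S. (G has_field_derivative Rep_cmat (log_deriv w) $ i $ j) (at w)" for i j
  proof -
    have holo: "(\<lambda>w. Rep_cmat (log_deriv w) $ i $ j) holomorphic_on S"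
      using mholo_on_log_deriv unfolding mholo_on_def by blast
    show ?thesis
      by (rule holomorphic_starlike_primitive[OF holomorphic_on_imp_continuous_on[OF holo]
            starlike_S open_S finite.emptyI])
        (use holo open_S in \<open>auto simp: holomorphic_on_open field_differentiable_def\<close>)
  qed
  then obtain G where G: "\<And>i j w. w \<in> S \<Longrightarrow> (G i j has_field_derivative Rep_cmat (log_deriv w) $ i $ j) (at w)"
    by metis
  define L where "L w = Abs_cmat (\<chi> i j. G i j w - G i j 0)" for w
  have "\<forall>w\<in>S. has_cmat_deriv L (log_deriv w) w"
    unfolding has_cmat_deriv_iff_entries L_def by (auto simp: Abs_cmat_inverse intro!: derivative_eq_intros G)
  moreover have "L 0 = 0"
    by (simp add: L_def zero_cmat_def zero_vec_def[symmetric])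
  ultimately show ?thesis by blast
qed

definition mlog :: "complex \<Rightarrow> 'n cmat" where
  "mlog = (SOME L. (\<forall>w\<in>S. has_cmat_deriv L (log_deriv w) w) \<and> L 0 = 0)"

lemma has_cmat_deriv_mlog: "w \<in> S \<Longrightarrow> has_cmat_deriv mlog (log_deriv w) w"
  and mlog_0: "mlog 0 = 0"
  using someI_ex[OF exists_primitive_log_deriv] unfolding mlog_def[symmetric] by auto

lemma mholo_on_mlog: "mholo_on (\<lambda>w. Rep_cmat (mlog w)) S"
  by (rule has_cmat_deriv_imp_mholo_on[OF has_cmat_deriv_mlog open_S])

lemma commute_mlog:
  assumes "\<And>z. z \<in> S \<Longrightarrow> A * log_deriv z = log_deriv z * A" "w \<in> S"
  shows "A * mlog w = mlog w * A"
proof -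
  define C where "C w = A * mlog w - mlog w * A" for w
  have "has_cmat_deriv C 0 z" if "z \<in> S" for z
  proof -
    have "has_cmat_deriv C (A * log_deriv z - (log_deriv z * A + mlog z * 0)) z"
      unfolding C_def
      by (intro has_cmat_deriv_diff has_cmat_deriv_mult_left has_cmat_deriv_mult has_cmat_deriv_mlog
          has_cmat_deriv_const that)
    then show ?thesis using assms(1)[OF that] by simp
  qed
  then have "C w = C 0"
    using has_cmat_deriv_zero_imp_constant[OF open_S connected_S _ assms(2) zero_in_S] by blast
  then show ?thesis by (simp add: C_def mlog_0)
qed

lemma h_mlog_commute: "v \<in> S \<Longrightarrow> w \<in> S \<Longrightarrow> h v * mlog w = mlog w * h v"
  by (rule commute_mlog) (auto intro!: log_deriv_commute h_commute simp: h_deriv_commute)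

lemma mlog_log_deriv_commute: "v \<in> S \<Longrightarrow> z \<in> S \<Longrightarrow> mlog v * log_deriv z = log_deriv z * mlog v"
proof (rule log_deriv_commute)
  assume "v \<in> S" "z \<in> S"
  then show "mlog v * h z = h z * mlog v"
    using h_mlog_commute by simp
  show "mlog v * cmat_deriv h z = cmat_deriv h z * mlog v"
    using has_cmat_deriv_commute[OF has_cmat_deriv_h[OF \<open>z \<in> S\<close>] open_S \<open>z \<in> S\<close>, of "mlog v"]
      h_mlog_commute \<open>v \<in> S\<close> by auto
qed

lemma mlog_commute: "v \<in> S \<Longrightarrow> w \<in> S \<Longrightarrow> mlog v * mlog w = mlog w * mlog v"
  by (rule commute_mlog) (auto intro: mlog_log_deriv_commute)

lemma exp_mlog:
  assumes "w \<in> S"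
  shows "exp (mlog w) = h w"
proof -
  define F where "F w = exp (- mlog w) * h w" for w
  have "has_cmat_deriv F 0 z" if z: "z \<in> S" for z
  proof -
    have "has_cmat_deriv (\<lambda>y. exp (- mlog y)) (exp (- mlog z) * - log_deriv z) z"
      by (rule has_cmat_deriv_exp[OF has_cmat_deriv_minus[OF has_cmat_deriv_mlog[OF z]] open_S z])
        (simp add: mlog_commute z)
    then have "has_cmat_deriv F (exp (- mlog z) * - log_deriv z * h z + exp (- mlog z) * cmat_deriv h z) z"
      unfolding F_def by (rule has_cmat_deriv_mult[OF _ has_cmat_deriv_h[OF z]])
    then show ?thesis
      by (simp add: mult.assoc log_deriv_mult_h z)
  qed
  then have "F w = F 0"
    using has_cmat_deriv_zero_imp_constant[OF open_S connected_S _ assms zero_in_S] by blast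
  then have "exp (- mlog w) * h w = 1" by (simp add: F_def mlog_0 h_0)
  then have "exp (mlog w) * (exp (- mlog w) * h w) = exp (mlog w)" by simp
  then show ?thesis by (simp add: mult.assoc[symmetric] exp_minus_inverse)
qed

lemma mlog_unique:
  assumes holo: "mholo_on (\<lambda>w. Rep_cmat (F w)) S" and exp_F: "\<And>w. w \<in> S \<Longrightarrow> exp (F w) = h w"
    and F_0: "F 0 = 0" and w: "w \<in> S"
  shows "F w = mlog w"
proof -
  have F: "(F \<longlongrightarrow> F 0) (nhds 0)" and mlog: "(mlog \<longlongrightarrow> mlog 0) (nhds 0)"
    using has_cmat_deriv_imp_isCont[OF mholo_on_imp_has_cmat_deriv[OF holo open_S zero_in_S]]
      has_cmat_deriv_imp_isCont[OF has_cmat_deriv_mlog[OF zero_in_S]]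
    by (simp_all only: isCont_def tendsto_at_iff_tendsto_nhds)
  have "eventually (\<lambda>v. F v \<in> ball 0 (1/2)) (nhds 0)"
    by (rule topological_tendstoD[OF F]) (simp_all add: F_0)
  moreover have "eventually (\<lambda>v. mlog v \<in> ball 0 (1/2)) (nhds 0)"
    by (rule topological_tendstoD[OF mlog]) (simp_all add: mlog_0)
  moreover have "eventually (\<lambda>v. v \<in> S) (nhds 0)"
    by (rule eventually_nhds_in_open[OF open_S zero_in_S])
  ultimately have "eventually (\<lambda>v. v \<in> S \<and> F v \<in> ball 0 (1/2) \<and> mlog v \<in> ball 0 (1/2)) (nhds 0)"
    by (intro eventually_conj)
  then obtain U where U: "open U" "0 \<in> U"
    and in_U: "\<And>v. v \<in> U \<Longrightarrow> v \<in> S \<and> F v \<in> ball 0 (1/2) \<and> mlog v \<in> ball 0 (1/2)"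
    unfolding eventually_nhds by blast
  have eq_U: "F v = mlog v" if "v \<in> U" for v
  proof -
    have v: "v \<in> S" "F v \<in> cball 0 (1/2)" "mlog v \<in> cball 0 (1/2)"
      using in_U[OF that] by auto
    show ?thesis
      by (rule inj_onD[OF inj_on_exp_cball _ v(2,3)]) (simp add: exp_F exp_mlog v(1))
  qed
  have "Rep_cmat (F w) $ i $ j = Rep_cmat (mlog w) $ i $ j" for i j
  proof (rule analytic_continuation_open[of U S "\<lambda>v. Rep_cmat (F v) $ i $ j" "\<lambda>v. Rep_cmat (mlog v) $ i $ j"])
    show "U \<subseteq> S" using in_U by blast
    show "Rep_cmat (F z) $ i $ j = Rep_cmat (mlog z) $ i $ j" if "z \<in> U" for z
      using eq_U[OF that] by simp
    show "(\<lambda>v. Rep_cmat (F v) $ i $ j) holomorphic_on S" "(\<lambda>v. Rep_cmat (mlog v) $ i $ j) holomorphic_on S"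
      using holo mholo_on_mlog unfolding mholo_on_def by blast+
  qed (use U open_S connected_S w in auto)
  then show ?thesis by (simp add: Rep_cmat_inject[symmetric] vec_eq_iff)
qed

end


section \<open>Rational matrix functions normalised at infinity\<close>

lemma poly_det: "poly (det P) u = det (\<chi> i j. poly (P $ i $ j) u)" for P :: "complex poly^'n^'n"
  unfolding det_def by (simp add: poly_sum poly_prod)

lemma det_divide_entries:
  fixes A :: "'a::field^'n^'n"
  shows "det (\<chi> i j. A $ i $ j / c) = det A / c ^ CARD('n)"
proof -
  have "det (\<chi> i j. A $ i $ j / c) =
      (\<Sum>p | p permutes UNIV. of_int (sign p) * (\<Prod>i\<in>UNIV. A $ i $ p i) / c ^ CARD('n))"
    unfolding det_def by (intro sum.cong refl) (simp add: prod_dividef)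
  also have "\<dots> = det A / c ^ CARD('n)"
    unfolding det_def by (simp add: sum_divide_distrib)
  finally show ?thesis .
qed

lemma eventually_at_notin_finite:
  assumes "finite A"
  shows "eventually (\<lambda>v. v \<notin> A) (at (u::'a::metric_space))"
proof -
  obtain d where "d > 0" "\<forall>x\<in>A. x \<noteq> u \<longrightarrow> d \<le> dist u x"
    using finite_set_avoid[OF assms] by blast
  then show ?thesis
    unfolding eventually_at by (metis dist_commute not_le)
qed

locale normalized_rational_mfun =
  fixes \<xi> :: "complex \<Rightarrow> complex^'n^'n" and P :: "complex poly^'n^'n" and q :: "complex poly"
  assumes q_nz: "q \<noteq> 0"
    and \<xi>_eq: "\<And>u. poly q u \<noteq> 0 \<Longrightarrow> \<xi> u = (\<chi> i j. poly (P$i$j) u / poly q u)"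
    and isCont_\<xi>: "\<And>u. \<not> is_pole \<xi> u \<Longrightarrow> isCont \<xi> u"
    and \<xi>_at_infinity: "(\<xi> \<longlongrightarrow> mat 1) at_infinity"
begin

lemma not_pole_if_q_nz:
  assumes "poly q u \<noteq> 0"
  shows "\<not> is_pole \<xi> u"
proof -
  define R where "R v = (\<chi> i j. poly (P$i$j) v / poly q v)" for v
  have "(R \<longlongrightarrow> \<xi> u) (at u)"
    using assms unfolding R_def \<xi>_eq[OF assms] by (intro tendsto_intros) auto
  moreover have "eventually (\<lambda>v. poly q v \<noteq> 0) (at u)"
    using eventually_at_notin_finite[OF poly_roots_finite[OF q_nz]] by simp
  then have "eventually (\<lambda>v. R v = \<xi> v) (at u)"
    by (rule eventually_mono) (simp add: R_def \<xi>_eq)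
  ultimately have "(\<xi> \<longlongrightarrow> \<xi> u) (at u)"
    by (rule Lim_transform_eventually)
  then show ?thesis
    unfolding is_pole_def using not_tendsto_and_filterlim_at_infinity[OF at_neq_bot] by blast
qed

lemma open_not_poles: "open {u. \<not> is_pole \<xi> u}"
proof -
  have "{u. is_pole \<xi> u} \<subseteq> {u. poly q u = 0}"
    using not_pole_if_q_nz by blast
  then have "finite {u. is_pole \<xi> u}"
    using poly_roots_finite[OF q_nz] by (rule finite_subset)
  then have "closed {u. is_pole \<xi> u}"
    by (rule finite_imp_closed)
  then show ?thesis
    by (simp add: Collect_neg_eq open_Compl)
qed

text \<open>At a root of \<open>q\<close> that is not a pole the singularity of \<open>\<xi>\<close> is removable.\<close>

lemma mholo_on_\<xi>: "mholo_on \<xi> {u. \<not> is_pole \<xi> u}"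
  unfolding mholo_on_def holomorphic_on_open[OF open_not_poles]
proof (intro allI ballI)
  fix i j x assume x: "x \<in> {u. \<not> is_pole \<xi> u}"
  obtain e where e: "e > 0" "\<And>w. w \<in> ball x e \<Longrightarrow> w \<noteq> x \<Longrightarrow> poly q w \<noteq> 0"
    using finite_ball_avoid[OF open_UNIV poly_roots_finite[OF q_nz], of x] by auto
  have holo: "(\<lambda>u. \<xi> u $ i $ j) holomorphic_on (ball x e - {x})"
  proof (rule holomorphic_transform)
    show "(\<lambda>u. poly (P$i$j) u / poly q u) holomorphic_on (ball x e - {x})"
      using e(2) by (intro holomorphic_intros) auto
    show "poly (P$i$j) u / poly q u = \<xi> u $ i $ j" if "u \<in> ball x e - {x}" for u
      using e(2) that by (simp add: \<xi>_eq)
  qed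
  have "((\<lambda>u. \<xi> u $ i $ j) \<longlongrightarrow> \<xi> x $ i $ j) (at x)"
    using isCont_\<xi> x unfolding isCont_def by (intro tendsto_vec_nth) simp
  then have lim: "((\<lambda>u. \<xi> u $ i $ j) \<longlongrightarrow> \<xi> x $ i $ j) (at x within ball x e)"
    by (rule tendsto_within_subset) simp
  have "(\<lambda>u. \<xi> u $ i $ j) holomorphic_on ball x e"
    by (rule no_isolated_singularity'[OF _ holo open_ball]) (use lim in auto)
  moreover have "x \<in> ball x e"
    using e(1) by simp
  ultimately show "\<exists>f'. ((\<lambda>u. \<xi> u $ i $ j) has_field_derivative f') (at x)"
    using holomorphic_derivI[OF _ open_ball] by blast
qed

lemma det_\<xi>: "poly q u \<noteq> 0 \<Longrightarrow> det (\<xi> u) = poly (det P) u / poly q u ^ CARD('n)"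
  by (simp add: \<xi>_eq poly_det det_divide_entries[of "\<chi> i j. poly (P $ i $ j) u", simplified])

lemma det_P_nz: "det P \<noteq> 0"
proof
  assume "det P = 0"
  obtain B where "\<And>z. poly q z = 0 \<Longrightarrow> norm z \<le> B"
    using finite_imp_bounded[OF poly_roots_finite[OF q_nz]] unfolding bounded_iff by blast
  then have "eventually (\<lambda>u. poly q u \<noteq> 0) at_infinity"
    unfolding eventually_at_infinity by (intro exI[of _ "B + 1"]) force
  then have "eventually (\<lambda>u. det (\<xi> u) = 0) at_infinity"
    by (rule eventually_mono) (simp add: det_\<xi> \<open>det P = 0\<close>)
  then have "((\<lambda>u. det (\<xi> u)) \<longlongrightarrow> 0) at_infinity"
    by (rule tendsto_eventually)
  moreover have "((\<lambda>u. det (\<xi> u)) \<longlongrightarrow> det (mat 1 :: complex^'n^'n)) at_infinity"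
    by (rule tendsto_det[OF \<xi>_at_infinity])
  ultimately show False
    using tendsto_unique[OF trivial_limit_at_infinity] by fastforce
qed

definition degenerate_points :: "complex set" where
  "degenerate_points = {u. poly (q * det P) u = 0}"

lemma finite_degenerate_points: "finite degenerate_points"
  unfolding degenerate_points_def using q_nz det_P_nz by (intro poly_roots_finite) simp

lemma det_\<xi>_nz: "u \<notin> degenerate_points \<Longrightarrow> det (\<xi> u) \<noteq> 0"
  by (simp add: degenerate_points_def det_\<xi>)

lemma pole_set_subset: "pole_set \<xi> \<subseteq> degenerate_points"
proof
  fix u assume u: "u \<in> pole_set \<xi>"
  show "u \<in> degenerate_points"
  proof (rule ccontr)
    assume "u \<notin> degenerate_points"
    then have "poly q u \<noteq> 0" by (simp add: degenerate_points_def)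
    then have "isCont \<xi> u" "\<not> is_pole \<xi> u"
      using not_pole_if_q_nz isCont_\<xi> by auto
    then have "((\<lambda>v. matrix_inv (\<xi> v)) \<longlongrightarrow> matrix_inv (\<xi> u)) (at u)"
      using \<open>u \<notin> degenerate_points\<close> by (intro tendsto_matrix_inv det_\<xi>_nz) (simp_all add: isCont_def)
    then have "\<not> is_pole (\<lambda>v. matrix_inv (\<xi> v)) u"
      unfolding is_pole_def using not_tendsto_and_filterlim_at_infinity[OF at_neq_bot] by blast
    with \<open>\<not> is_pole \<xi> u\<close> u show False by (simp add: pole_set_def)
  qed
qed

lemma finite_pole_set: "finite (pole_set \<xi>)"
  using pole_set_subset finite_degenerate_points by (rule finite_subset)

text \<open>If \<open>det \<xi>\<close> vanished at a regular point, \<open>det \<xi>\<^sup>-\<^sup>1 = 1 / det \<xi>\<close> would blow up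
  there, and with it \<open>\<xi>\<^sup>-\<^sup>1\<close>.\<close>

lemma det_\<xi>_nz_if_not_in_pole_set:
  assumes "u \<notin> pole_set \<xi>"
  shows "det (\<xi> u) \<noteq> 0"
proof
  assume "det (\<xi> u) = 0"
  then have "((\<lambda>v. det (\<xi> v)) \<longlongrightarrow> 0) (at u)"
    using tendsto_det[of \<xi> "\<xi> u" "at u"] isCont_\<xi> assms by (auto simp: isCont_def pole_set_def)
  moreover have ev: "eventually (\<lambda>v. v \<notin> degenerate_points) (at u)"
    by (rule eventually_at_notin_finite[OF finite_degenerate_points])
  then have "eventually (\<lambda>v. det (\<xi> v) \<noteq> 0) (at u)"
    by (rule eventually_mono) (rule det_\<xi>_nz)
  ultimately have "filterlim (\<lambda>v. inverse (det (\<xi> v))) at_infinity (at u)"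
    by (intro filterlim_compose[OF filterlim_inverse_at_infinity] filterlim_atI)
  moreover have "eventually (\<lambda>v. inverse (det (\<xi> v)) = det (matrix_inv (\<xi> v))) (at u)"
    using ev by (rule eventually_mono) (simp add: det_matrix_inv det_\<xi>_nz)
  ultimately have "filterlim (\<lambda>v. det (matrix_inv (\<xi> v))) at_infinity (at u)"
    by (simp add: filterlim_cong)
  then have "is_pole (\<lambda>v. matrix_inv (\<xi> v)) u"
    unfolding is_pole_def by (rule filterlim_at_infinity_if_det)
  with assms show False by (simp add: pole_set_def)
qed

lemma \<xi>_eq_1_if_no_poles:
  assumes "pole_set \<xi> = {}"
  shows "\<xi> u = mat 1"
proof -
  have "\<xi> u $ i $ j = mat 1 $ i $ j" for i j
  proof (rule Liouville_weak[of "\<lambda>u. \<xi> u $ i $ j"])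
    show "(\<lambda>u. \<xi> u $ i $ j) holomorphic_on UNIV"
      using mholo_on_\<xi> assms by (simp add: mholo_on_def pole_set_def)
    show "((\<lambda>u. \<xi> u $ i $ j) \<longlongrightarrow> mat 1 $ i $ j) at_infinity"
      by (intro tendsto_vec_nth \<xi>_at_infinity)
  qed
  then show ?thesis by (simp add: vec_eq_iff)
qed

end


section \<open>The cut plane and its image under inversion\<close>

lemma scaleR_mem_cutX:
  assumes "z \<in> cutX f" "0 \<le> t" "t \<le> 1"
  shows "t *\<^sub>R z \<in> cutX f"
proof -
  obtain a where a: "a \<in> pole_set f" "z \<in> closed_segment 0 a"
    using assms(1) unfolding cutX_def by blast
  then obtain s where s: "0 \<le> s" "s \<le> 1" "z = s *\<^sub>R a"
    unfolding in_segment by auto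
  have "t *\<^sub>R z \<in> closed_segment 0 a"
    unfolding in_segment using s assms(2,3) by (intro exI[of _ "t * s"]) (simp add: mult_le_one)
  with a(1) show ?thesis
    unfolding cutX_def by blast
qed

lemma compact_cutX: "finite (pole_set f) \<Longrightarrow> compact (cutX f)"
  unfolding cutX_def by (intro compact_UN) auto

lemma zero_in_cutX_iff: "0 \<in> cutX f \<longleftrightarrow> pole_set f \<noteq> {}"
  unfolding cutX_def by auto

lemma pole_set_subset_cutX: "pole_set f \<subseteq> cutX f"
  unfolding cutX_def by auto

lemma open_inversion_of_compl:
  fixes K :: "complex set"
  assumes "compact K"
  shows "open {w. w = 0 \<or> inverse w \<notin> K}"
proof -
  obtain R where R: "R > 0" "\<And>z. z \<in> K \<Longrightarrow> norm z \<le> R"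
    using compact_imp_bounded[OF assms] bounded_pos by blast
  have "inverse w \<notin> K" if "w \<in> ball 0 (inverse R)" "w \<noteq> 0" for w
  proof -
    have "norm w * R < 1" "0 < norm w"
      using that R(1) by (simp_all add: field_simps)
    then have "R < inverse (norm w)"
      by (simp add: field_simps)
    then show ?thesis using R(2) by (force simp: norm_inverse)
  qed
  then have "{w. w = 0 \<or> inverse w \<notin> K} = ball 0 (inverse R) \<union> (- {0} \<inter> inverse -` (- K))"
    using R(1) by auto
  moreover have "open (- {0} \<inter> inverse -` (- K))"
    using assms by (intro continuous_open_preimage) (auto intro!: continuous_intros compact_imp_closed)
  ultimately show ?thesis by auto
qed

lemma starlike_inversion_of_compl:
  fixes K :: "complex set"
  assumes "\<And>z t. z \<in> K \<Longrightarrow> 0 \<le> t \<Longrightarrow> t \<le> 1 \<Longrightarrow> t *\<^sub>R z \<in> K"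
  shows "starlike {w. w = 0 \<or> inverse w \<notin> K}"
  unfolding starlike_def
proof (rule bexI[of _ 0], intro ballI subsetI)
  fix w x assume w: "w \<in> {w. w = 0 \<or> inverse w \<notin> K}" and "x \<in> closed_segment 0 w"
  then obtain t where t: "0 \<le> t" "t \<le> 1" "x = t *\<^sub>R w"
    unfolding in_segment by auto
  show "x \<in> {w. w = 0 \<or> inverse w \<notin> K}"
  proof (cases "x = 0")
    case False
    then have "w \<noteq> 0" "t \<noteq> 0"
      using t(3) by auto
    then have "t *\<^sub>R inverse x = inverse w"
      using t(3) by (simp add: scaleR_conv_of_real)
    then have "inverse x \<notin> K"
      using assms[of "inverse x" t] w t(1,2) \<open>w \<noteq> 0\<close> by auto
    then show ?thesis by simp
  qed simp
qed simp

context normalized_rational_mfun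
begin

definition inversion_domain :: "complex set" where
  "inversion_domain = {w. w = 0 \<or> inverse w \<notin> cutX \<xi>}"

definition h :: "complex \<Rightarrow> 'n cmat" where
  "h w = (if w = 0 then 1 else Abs_cmat (\<xi> (inverse w)))"

lemma Rep_h: "Rep_cmat (h w) = (if w = 0 then mat 1 else \<xi> (inverse w))"
  by (simp add: h_def one_cmat.rep_eq Abs_cmat_inverse)

lemma open_inversion_domain: "open inversion_domain"
  unfolding inversion_domain_def by (rule open_inversion_of_compl[OF compact_cutX[OF finite_pole_set]])

lemma starlike_inversion_domain: "starlike inversion_domain"
  unfolding inversion_domain_def by (rule starlike_inversion_of_compl[OF scaleR_mem_cutX])

lemma zero_in_inversion_domain: "0 \<in> inversion_domain"
  by (simp add: inversion_domain_def)

lemma open_compl_cutX: "open (- cutX \<xi>)"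
  by (intro open_Compl compact_imp_closed compact_cutX finite_pole_set)

lemma inverse_in_inversion_domain: "u \<notin> cutX \<xi> \<Longrightarrow> inverse u \<in> inversion_domain"
  by (simp add: inversion_domain_def)

lemma inverse_notin_cutX: "w \<in> inversion_domain \<Longrightarrow> w \<noteq> 0 \<Longrightarrow> inverse w \<notin> cutX \<xi>"
  by (simp add: inversion_domain_def)

lemma mholo_on_h: "mholo_on (\<lambda>w. Rep_cmat (h w)) inversion_domain"
  unfolding mholo_on_def
proof (intro allI)
  fix i j
  have "(\<lambda>u. \<xi> u $ i $ j) holomorphic_on - cutX \<xi>"
    using mholo_on_\<xi> pole_set_subset_cutX unfolding mholo_on_def pole_set_def
    by (blast intro: holomorphic_on_subset)
  then have "(\<lambda>u. \<xi> u $ i $ j) \<circ> inverse holomorphic_on (inversion_domain - {0})"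
    by (rule holomorphic_on_compose_gen[rotated])
      (auto intro!: holomorphic_intros simp: inverse_notin_cutX)
  then have holo: "(\<lambda>w. Rep_cmat (h w) $ i $ j) holomorphic_on (inversion_domain - {0})"
    by (rule holomorphic_transform) (simp add: Rep_h)
  have "((\<lambda>w. \<xi> (inverse w)) \<longlongrightarrow> mat 1) (at 0)"
    by (rule filterlim_compose[OF \<xi>_at_infinity filterlim_inverse_at_infinity])
  then have "((\<lambda>w. \<xi> (inverse w) $ i $ j) \<longlongrightarrow> Rep_cmat (h 0) $ i $ j) (at 0)"
    unfolding Rep_h by (simp add: tendsto_vec_nth)
  moreover have "eventually (\<lambda>w. \<xi> (inverse w) $ i $ j = Rep_cmat (h w) $ i $ j) (at 0)"
    by (simp add: eventually_at_filter Rep_h)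
  ultimately have "((\<lambda>w. Rep_cmat (h w) $ i $ j) \<longlongrightarrow> Rep_cmat (h 0) $ i $ j) (at 0)"
    by (rule Lim_transform_eventually)
  then have lim: "((\<lambda>w. Rep_cmat (h w) $ i $ j) \<longlongrightarrow> Rep_cmat (h 0) $ i $ j) (at 0 within inversion_domain)"
    by (rule tendsto_within_subset) simp
  show "(\<lambda>w. Rep_cmat (h w) $ i $ j) holomorphic_on inversion_domain"
    by (rule no_isolated_singularity'[OF _ holo open_inversion_domain]) (use lim in auto)
qed

lemma mholo_on_inversion_domain:
  assumes holo: "mholo_on f (- cutX \<xi>)" and inf: "holo_at_inf_zero f"
  shows "mholo_on (\<lambda>w. if w = 0 then 0 else f (inverse w)) inversion_domain"
  unfolding mholo_on_def
proof (intro allI)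
  fix i j
  obtain r where r: "r > 0" "mholo_on (\<lambda>w. if w = 0 then 0 else f (inverse w)) (ball 0 r)"
    using inf unfolding holo_at_inf_zero_def by blast
  have "(\<lambda>v. f v $ i $ j) \<circ> inverse holomorphic_on inversion_domain - {0}"
  proof (rule holomorphic_on_compose_gen[of _ _ _ "- cutX \<xi>"])
    show "(\<lambda>v. f v $ i $ j) holomorphic_on - cutX \<xi>"
      using holo unfolding mholo_on_def by blast
  qed (auto intro!: holomorphic_intros simp: inverse_notin_cutX)
  then have "(\<lambda>w. (if w = 0 then 0 else f (inverse w)) $ i $ j) holomorphic_on inversion_domain - {0}"
    by (rule holomorphic_transform) simp
  moreover have "(\<lambda>w. (if w = 0 then 0 else f (inverse w)) $ i $ j) holomorphic_on ball 0 r"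
    using r(2) by (simp add: mholo_on_def)
  ultimately have "(\<lambda>w. (if w = 0 then 0 else f (inverse w)) $ i $ j)
      holomorphic_on (inversion_domain - {0}) \<union> ball 0 r"
    using open_inversion_domain by (intro holomorphic_on_Un) auto
  then show "(\<lambda>w. (if w = 0 then 0 else f (inverse w)) $ i $ j) holomorphic_on inversion_domain"
    by (rule holomorphic_on_subset) (use r(1) in auto)
qed

lemma det_h: "w \<in> inversion_domain \<Longrightarrow> det (Rep_cmat (h w)) \<noteq> 0"
  using det_\<xi>_nz_if_not_in_pole_set pole_set_subset_cutX inverse_notin_cutX
  by (auto simp: Rep_h)

lemma h_0: "h 0 = 1"
  by (simp add: h_def)

lemma mderiv_h:
  assumes "w \<in> inversion_domain" "w \<noteq> 0"
  shows "mderiv (\<lambda>v. Rep_cmat (h v)) w $ k $ j = - (inverse w)\<^sup>2 * mderiv \<xi> (inverse w) $ k $ j"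
proof -
  have "eventually (\<lambda>v. Rep_cmat (h v) $ i $ j = \<xi> (inverse v) $ i $ j) (nhds w)" for i j
    using t1_space_nhds[OF assms(2)] by (rule eventually_mono) (simp add: Rep_h)
  then have "mderiv (\<lambda>v. Rep_cmat (h v)) w = mderiv (\<lambda>v. \<xi> (inverse v)) w"
    unfolding mderiv_def by (auto simp: vec_eq_iff intro!: deriv_cong_ev)
  moreover have "((\<lambda>v. \<xi> v $ i $ j) has_field_derivative mderiv \<xi> (inverse w) $ i $ j) (at (inverse w))"
    for i j
  proof -
    have "inverse w \<in> {u. \<not> is_pole \<xi> u}"
      using assms inverse_notin_cutX pole_set_subset_cutX by (auto simp: pole_set_def)
    moreover have "(\<lambda>v. \<xi> v $ i $ j) holomorphic_on {u. \<not> is_pole \<xi> u}"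
      using mholo_on_\<xi> by (simp add: mholo_on_def)
    ultimately show ?thesis
      unfolding mderiv_def using holomorphic_derivI[OF _ open_not_poles] by simp
  qed
  ultimately show ?thesis
    using mderiv_compose_inverse[of \<xi> "mderiv \<xi> (inverse w)" w] assms(2) by simp
qed

lemma \<xi>_eq_1_if_zero_notin_cutX: "0 \<notin> cutX \<xi> \<Longrightarrow> \<xi> u = mat 1"
  by (simp add: zero_in_cutX_iff \<xi>_eq_1_if_no_poles)

end

locale commuting_normalized_rational_mfun =
  normalized_rational_mfun \<xi> P q for \<xi> :: "complex \<Rightarrow> complex^'n^'n" and P q +
  assumes \<xi>_commute: "\<And>u v. \<not> is_pole \<xi> u \<Longrightarrow> \<not> is_pole \<xi> v \<Longrightarrow> \<xi> u ** \<xi> v = \<xi> v ** \<xi> u"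
begin

lemma h_commute: "v \<in> inversion_domain \<Longrightarrow> w \<in> inversion_domain \<Longrightarrow> h v * h w = h w * h v"
  using inverse_notin_cutX pole_set_subset_cutX
  by (auto simp: Rep_cmat_inject[symmetric] times_cmat.rep_eq Rep_h pole_set_def intro!: \<xi>_commute)

sublocale L: starlike_matrix_log inversion_domain h
proof
  show "open inversion_domain" by (rule open_inversion_domain)
  show "starlike inversion_domain" by (rule starlike_inversion_domain)
  show "0 \<in> inversion_domain" by (rule zero_in_inversion_domain)
  show "mholo_on (\<lambda>w. Rep_cmat (h w)) inversion_domain" by (rule mholo_on_h)
  show "h 0 = 1" by (rule h_0)
  show "det (Rep_cmat (h w)) \<noteq> 0" if "w \<in> inversion_domain" for w
    using that by (rule det_h)
  show "h v * h w = h w * h v" if "v \<in> inversion_domain" "w \<in> inversion_domain" for v w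
    using that by (rule h_commute)
qed

definition t :: "complex \<Rightarrow> complex^'n^'n" where
  "t u = Rep_cmat (L.mlog (inverse u))"

lemma t_eq_0_if_zero_notin_cutX:
  assumes "0 \<notin> cutX \<xi>"
  shows "t u = 0"
proof -
  have "h w = 1" for w
    using assms by (simp add: h_def \<xi>_eq_1_if_zero_notin_cutX one_cmat_def)
  moreover have "cutX \<xi> = {}"
    using assms by (simp add: zero_in_cutX_iff cutX_def)
  ultimately have "0 = L.mlog (inverse u)"
    by (intro L.mlog_unique[of "\<lambda>_. 0"]) (simp_all add: mholo_on_def zero_cmat.rep_eq inversion_domain_def)
  then show ?thesis by (simp add: t_def zero_cmat.rep_eq)
qed

lemma mholo_on_t: "mholo_on t (- cutX \<xi>)"
proof (cases "0 \<in> cutX \<xi>")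
  case True
  have "(\<lambda>u. Rep_cmat (L.mlog u) $ i $ j) \<circ> inverse holomorphic_on - cutX \<xi>" for i j
  proof (rule holomorphic_on_compose_gen[of _ _ _ inversion_domain])
    show "inverse holomorphic_on - cutX \<xi>"
      using True by (auto intro!: holomorphic_intros)
    show "(\<lambda>u. Rep_cmat (L.mlog u) $ i $ j) holomorphic_on inversion_domain"
      using L.mholo_on_mlog unfolding mholo_on_def by blast
  qed (auto simp: inverse_in_inversion_domain)
  then show ?thesis by (simp add: mholo_on_def t_def o_def)
qed (simp add: mholo_on_def t_eq_0_if_zero_notin_cutX)

lemma holo_at_inf_zero_t: "holo_at_inf_zero t"
proof -
  obtain r where r: "r > 0" "ball 0 r \<subseteq> inversion_domain"
    using open_contains_ball_eq[OF open_inversion_domain] zero_in_inversion_domain by blast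
  have "mholo_on (\<lambda>w. if w = 0 then 0 else t (inverse w)) (ball 0 r)"
    unfolding mholo_on_def
  proof (intro allI)
    fix i j
    have "(\<lambda>w. Rep_cmat (L.mlog w) $ i $ j) holomorphic_on ball 0 r"
      using L.mholo_on_mlog r(2) holomorphic_on_subset unfolding mholo_on_def by blast
    then show "(\<lambda>w. (if w = 0 then 0 else t (inverse w)) $ i $ j) holomorphic_on ball 0 r"
      by (rule holomorphic_transform) (simp add: t_def L.mlog_0 zero_cmat.rep_eq)
  qed
  with r(1) show ?thesis
    unfolding holo_at_inf_zero_def by blast
qed

lemma mexp_t: "u \<notin> cutX \<xi> \<Longrightarrow> mexp (t u) = \<xi> u"
  using L.exp_mlog[OF inverse_in_inversion_domain] \<xi>_eq_1_if_zero_notin_cutX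
  by (cases "u = 0") (auto simp: t_def mexp_Rep_cmat Rep_h L.mlog_0 one_cmat.rep_eq)

lemma t_commute: "u \<notin> cutX \<xi> \<Longrightarrow> v \<notin> cutX \<xi> \<Longrightarrow> t u ** t v = t v ** t u"
  using L.mlog_commute[OF inverse_in_inversion_domain inverse_in_inversion_domain]
  by (simp add: t_def times_cmat.rep_eq[symmetric])

lemma mderiv_t:
  assumes "u \<notin> cutX \<xi>"
  shows "mderiv t u = matrix_inv (\<xi> u) ** mderiv \<xi> u"
proof (cases "u = 0")
  case True
  then have "mderiv t u = 0" "mderiv \<xi> u = 0"
    using assms t_eq_0_if_zero_notin_cutX \<xi>_eq_1_if_zero_notin_cutX by (simp_all add: mderiv_def vec_eq_iff)
  then show ?thesis by (simp add: vec_eq_iff matrix_matrix_mult_def)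
next
  case False
  define w where "w = inverse u"
  have w: "w \<in> inversion_domain" "w \<noteq> 0" "inverse w = u"
    using assms False by (auto simp: w_def inverse_in_inversion_domain)
  have "w * u = 1"
    using False by (simp add: w_def)
  have "mderiv t u $ i $ j = (matrix_inv (\<xi> u) ** mderiv \<xi> u) $ i $ j" for i j
  proof -
    have "mderiv t u $ i $ j = - w\<^sup>2 * Rep_cmat (L.log_deriv w) $ i $ j"
      using mderiv_compose_inverse[of "\<lambda>v. Rep_cmat (L.mlog v)" "Rep_cmat (L.log_deriv w)" u i j]
        L.has_cmat_deriv_mlog[OF w(1)] False
      unfolding has_cmat_deriv_iff_entries by (simp add: t_def[abs_def] w_def)
    also have "\<dots> = - w\<^sup>2 * (\<Sum>k\<in>UNIV. matrix_inv (\<xi> u) $ i $ k * (- u\<^sup>2 * mderiv \<xi> u $ k $ j))"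
      using w by (simp add: L.Rep_log_deriv Rep_h[of w] matrix_matrix_mult_def mderiv_h)
    also have "\<dots> = (\<Sum>k\<in>UNIV. (w * u)\<^sup>2 * (matrix_inv (\<xi> u) $ i $ k * mderiv \<xi> u $ k $ j))"
      by (simp add: sum_distrib_left power_mult_distrib mult_ac)
    finally show ?thesis
      using \<open>w * u = 1\<close> by (simp add: matrix_matrix_mult_def)
  qed
  then show ?thesis
    by (simp add: vec_eq_iff)
qed

end


context commuting_normalized_rational_mfun
begin

lemma t_unique:
  assumes holo: "mholo_on t' (- cutX \<xi>)" and inf: "holo_at_inf_zero t'"
    and exp_t': "\<And>u. u \<notin> cutX \<xi> \<Longrightarrow> mexp (t' u) = \<xi> u" and u: "u \<notin> cutX \<xi>"
  shows "t' u = t u"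
proof -
  define F where "F w = Abs_cmat (if w = 0 then 0 else t' (inverse w))" for w
  have Rep_F: "Rep_cmat (F w) = (if w = 0 then 0 else t' (inverse w))" for w
    by (simp add: F_def Abs_cmat_inverse)
  have F_0: "F 0 = 0"
    by (simp add: F_def zero_cmat_def)
  have exp_F: "exp (F w) = h w" if w: "w \<in> inversion_domain" for w
  proof (cases "w = 0")
    case False
    have "Rep_cmat (exp (F w)) = mexp (t' (inverse w))"
      by (simp add: mexp_Rep_cmat[symmetric] Rep_F False)
    also have "\<dots> = Rep_cmat (h w)"
      using exp_t' inverse_notin_cutX[OF w False] by (simp add: Rep_h False)
    finally show ?thesis
      by (simp add: Rep_cmat_inject)
  qed (simp add: F_0 h_0)
  have "mholo_on (\<lambda>w. Rep_cmat (F w)) inversion_domain"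
    using mholo_on_inversion_domain[OF holo inf] by (simp add: Rep_F)
  then have F: "F w = L.mlog w" if "w \<in> inversion_domain" for w
    using L.mlog_unique exp_F F_0 that by blast
  have "t' v = t v" if "v \<notin> cutX \<xi>" "v \<noteq> 0" for v
  proof -
    have "t' v = Rep_cmat (F (inverse v))"
      using that(2) by (simp add: Rep_F)
    then show ?thesis
      using F[OF inverse_in_inversion_domain[OF that(1)]] by (simp add: t_def)
  qed
  then show ?thesis
    using mholo_on_eq_at_point[OF holo mholo_on_t open_compl_cutX] u by (cases "u = 0") auto
qed

end

theorem proposition5p4:
  fixes \<xi> :: "complex \<Rightarrow> complex^'n^'n"
  assumes rat: "rational_mfun \<xi>"
    and at_inf: "(\<xi> \<longlongrightarrow> mat 1) at_infinity"
    and comm: "\<And>u v. \<not> is_pole \<xi> u \<Longrightarrow> \<not> is_pole \<xi> v \<Longrightarrow> \<xi> u ** \<xi> v = \<xi> v ** \<xi> u"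
  shows "\<exists>t. (mholo_on t (- cutX \<xi>) \<and> holo_at_inf_zero t \<and>
               (\<forall>u\<in>- cutX \<xi>. mexp (t u) = \<xi> u)) \<and>
             (\<forall>t'. mholo_on t' (- cutX \<xi>) \<and> holo_at_inf_zero t' \<and>
                   (\<forall>u\<in>- cutX \<xi>. mexp (t' u) = \<xi> u)
                   \<longrightarrow> (\<forall>u\<in>- cutX \<xi>. t' u = t u)) \<and>
             (\<forall>u\<in>- cutX \<xi>. \<forall>v\<in>- cutX \<xi>. t u ** t v = t v ** t u) \<and>
             (\<forall>u\<in>- cutX \<xi>. mderiv t u = matrix_inv (\<xi> u) ** mderiv \<xi> u)"
proof -
  obtain P q where "q \<noteq> 0" "\<And>u. poly q u \<noteq> 0 \<Longrightarrow> \<xi> u = (\<chi> i j. poly (P$i$j) u / poly q u)"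
    and "\<And>u. \<not> is_pole \<xi> u \<Longrightarrow> isCont \<xi> u"
    using rat unfolding rational_mfun_def by blast
  then interpret commuting_normalized_rational_mfun \<xi> P q
    by unfold_locales (use at_inf comm in auto)
  show ?thesis
  proof (intro exI[of _ t] conjI ballI allI impI)
    show "mholo_on t (- cutX \<xi>)" "holo_at_inf_zero t"
      by (fact mholo_on_t holo_at_inf_zero_t)+
    show "mexp (t u) = \<xi> u" "mderiv t u = matrix_inv (\<xi> u) ** mderiv \<xi> u" if "u \<in> - cutX \<xi>" for u
      using that mexp_t mderiv_t by simp_all
    show "t u ** t v = t v ** t u" if "u \<in> - cutX \<xi>" "v \<in> - cutX \<xi>" for u v
      using that t_commute by simp
    show "t' u = t u" if "mholo_on t' (- cutX \<xi>) \<and> holo_at_inf_zero t' \<and>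
        (\<forall>u\<in>- cutX \<xi>. mexp (t' u) = \<xi> u)" "u \<in> - cutX \<xi>" for t' u
      using that by (intro t_unique) auto
  qed
qed

end
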